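(* Let $\{Y_n;\,n\ge1\}$ be a sequence of random variables with values in a real separable Banach space $\mathbf{B}$ such that $Y_n\to0$ in probability. Let $\{Y_n';\,n\ge1\}$ be an independent copy of $\{Y_n;\,n\ge1\}$ and set $\hat Y_n=Y_n-Y_n'$. Let $\{a_n;\,n\ge1\}$ be positive numbers with $a_n\to\infty$. If there exist constants $0\le\bar\gamma\le\underline\gamma\le\infty$ such that for all $s>0$ $$\limsup_{n\to\infty}\frac1{a_n}\log\mathbb{P}(\|\hat Y_n\|>s)=-\bar\gamma\quad\text{and}\quad\liminf_{n\to\infty}\frac1{a_n}\log\mathbb{P}(\|\hat Y_n\|>s)=-\underline\gamma,$$ then for all $s>0$ $$\limsup_{n\to\infty}\frac1{a_n}\log\mathbb{P}(\|Y_n\|>s)=-\bar\gamma\quad\text{and}\quad\liminf_{n\to\infty}\frac1{a_n}\log\mathbb{P}(\|Y_n\|>s)=-\underline\gamma.$$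
   Context: Convention: $\log0=-\infty$. *)

theory Defs
  imports "HOL-Probability.Probability"
begin

definition elog :: "real \<Rightarrow> ereal" where
  "elog p = (if p = 0 then -\<infinity> else ereal (ln p))"

definition log_tail :: "'a measure \<Rightarrow> real \<Rightarrow> ('a \<Rightarrow> 'b::real_normed_vector) \<Rightarrow> real \<Rightarrow> ereal" where
  "log_tail M a X s = ereal (1 / a) * elog (measure M {\<omega> \<in> space M. s < norm (X \<omega>)})"

end

theory Submission imports Defs begin

text \<open>
  Two symmetrization inequalities compare the tails of \<open>Y\<^sub>n\<close> and \<open>\<hat>Y\<^sub>n = Y\<^sub>n - Y'\<^sub>n\<close>:
  \<open>P(\<parallel>\<hat>Y\<^sub>n\<parallel> > 2s) \<le> 2 P(\<parallel>Y\<^sub>n\<parallel> > s)\<close> by the triangle inequality and equal distributions, and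
  \<open>P(\<parallel>Y\<^sub>n\<parallel> > s + t) P(\<parallel>Y'\<^sub>n\<parallel> \<le> t) \<le> P(\<parallel>\<hat>Y\<^sub>n\<parallel> > s)\<close> by independence, where the second
  factor exceeds 1/2 eventually because \<open>Y\<^sub>n \<rightarrow> 0\<close> in probability. A constant factor
  disappears after taking \<open>(1/a\<^sub>n) log\<close> with \<open>a\<^sub>n \<rightarrow> \<infinity>\<close>, and the limits for \<open>\<hat>Y\<^sub>n\<close> do not
  depend on the level, so the level shifts \<open>s \<mapsto> 2s\<close> and \<open>s \<mapsto> s/2\<close> are harmless.
\<close>

lemma scaled_elog_le_mult:
  fixes p q C a :: real
  assumes "0 \<le> p" "0 \<le> q" "0 < C" "p \<le> C * q" "0 < a"
  shows "ereal (1/a) * elog p \<le> ereal (1/a) * elog q + ereal (ln C / a)"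
proof (cases "p = 0")
  case True
  then show ?thesis using assms by (simp add: elog_def)
next
  case False
  with assms have "p > 0" "q > 0"
    by (auto simp: zero_less_mult_iff order.strict_iff_order)
  have "ln p \<le> ln (C * q)"
    using assms \<open>p > 0\<close> \<open>q > 0\<close> by simp
  also have "\<dots> = ln C + ln q"
    using \<open>q > 0\<close> \<open>C > 0\<close> by (simp add: ln_mult)
  finally have "ln p \<le> ln C + ln q" .
  then have "ln p / a \<le> ln q / a + ln C / a"
    using \<open>0 < a\<close> by (simp add: divide_right_mono flip: add_divide_distrib)
  then show ?thesis using \<open>p > 0\<close> \<open>q > 0\<close> by (simp add: elog_def)
qed

lemma eventually_scaled_elog_le:
  fixes p q a :: "nat \<Rightarrow> real" and C e :: real
  assumes "filterlim a at_top sequentially" "\<And>n. a n > 0" "C > 0" "e > 0"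
    and "eventually (\<lambda>n. 0 \<le> p n \<and> 0 \<le> q n \<and> p n \<le> C * q n) sequentially"
  shows "eventually (\<lambda>n. ereal (1/a n) * elog (p n) \<le> ereal (1/a n) * elog (q n) + ereal e) sequentially"
proof -
  have "eventually (\<lambda>n. \<bar>ln C\<bar> / e \<le> a n) sequentially"
    using assms(1) by (simp add: filterlim_at_top)
  then show ?thesis using assms(5)
  proof eventually_elim
    case (elim n)
    have "ln C / a n \<le> e"
      using elim \<open>a n > 0\<close> \<open>e > 0\<close> by (simp add: divide_le_eq pos_divide_le_eq mult.commute)
    then have "ereal (ln C / a n) \<le> ereal e" by simp
    then show ?case
      using scaled_elog_le_mult[of "p n" "q n" C "a n"] elim \<open>a n > 0\<close> \<open>C > 0\<close>
      by (meson add_left_mono order_trans)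
  qed
qed

lemma
  fixes p q a :: "nat \<Rightarrow> real" and C :: real
  assumes "filterlim a at_top sequentially" "\<And>n. a n > 0" "C > 0"
    and "eventually (\<lambda>n. 0 \<le> p n \<and> 0 \<le> q n \<and> p n \<le> C * q n) sequentially"
  shows limsup_scaled_elog_le:
      "limsup (\<lambda>n. ereal (1/a n) * elog (p n)) \<le> limsup (\<lambda>n. ereal (1/a n) * elog (q n))"
    and liminf_scaled_elog_le:
      "liminf (\<lambda>n. ereal (1/a n) * elog (p n)) \<le> liminf (\<lambda>n. ereal (1/a n) * elog (q n))"
proof -
  note le = eventually_scaled_elog_le[OF assms(1-3) _ assms(4)]
  show "limsup (\<lambda>n. ereal (1/a n) * elog (p n)) \<le> limsup (\<lambda>n. ereal (1/a n) * elog (q n))"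
  proof (rule ereal_le_epsilon2)
    fix e :: real assume "e > 0"
    have "limsup (\<lambda>n. ereal (1/a n) * elog (p n)) \<le> limsup (\<lambda>n. ereal (1/a n) * elog (q n) + ereal e)"
      using le[OF \<open>e > 0\<close>] by (rule Limsup_mono)
    also have "\<dots> = limsup (\<lambda>n. ereal (1/a n) * elog (q n)) + ereal e"
      by (rule Limsup_add_ereal_right) auto
    finally show "limsup (\<lambda>n. ereal (1/a n) * elog (p n)) \<le> limsup (\<lambda>n. ereal (1/a n) * elog (q n)) + ereal e" .
  qed
  show "liminf (\<lambda>n. ereal (1/a n) * elog (p n)) \<le> liminf (\<lambda>n. ereal (1/a n) * elog (q n))"
  proof (rule ereal_le_epsilon2)
    fix e :: real assume "e > 0"
    have "liminf (\<lambda>n. ereal (1/a n) * elog (p n)) \<le> liminf (\<lambda>n. ereal (1/a n) * elog (q n) + ereal e)"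
      using le[OF \<open>e > 0\<close>] by (rule Liminf_mono)
    also have "\<dots> = liminf (\<lambda>n. ereal (1/a n) * elog (q n)) + ereal e"
      by (rule Liminf_add_ereal_right) auto
    finally show "liminf (\<lambda>n. ereal (1/a n) * elog (p n)) \<le> liminf (\<lambda>n. ereal (1/a n) * elog (q n)) + ereal e" .
  qed
qed

lemma
  fixes M :: "'a measure" and X Z :: "nat \<Rightarrow> 'a \<Rightarrow> 'b::real_normed_vector"
    and a :: "nat \<Rightarrow> real" and C s t :: real
  assumes "filterlim a at_top sequentially" "\<And>n. a n > 0" "C > 0"
    and "eventually (\<lambda>n. measure M {\<omega> \<in> space M. s < norm (X n \<omega>)}
        \<le> C * measure M {\<omega> \<in> space M. t < norm (Z n \<omega>)}) sequentially"
  shows limsup_log_tail_le: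
      "limsup (\<lambda>n. log_tail M (a n) (X n) s) \<le> limsup (\<lambda>n. log_tail M (a n) (Z n) t)"
    and liminf_log_tail_le:
      "liminf (\<lambda>n. log_tail M (a n) (X n) s) \<le> liminf (\<lambda>n. log_tail M (a n) (Z n) t)"
  using limsup_scaled_elog_le[OF assms(1-3)] liminf_scaled_elog_le[OF assms(1-3)] assms(4)
  unfolding log_tail_def by (simp_all add: eventually_mono)

context prob_space
begin

lemma prob_norm_gt_eq_of_distr_eq:
  fixes X X' :: "'a \<Rightarrow> 'b::real_normed_vector"
  assumes "X \<in> borel_measurable M" "X' \<in> borel_measurable M"
    and "distr M borel X = distr M borel X'"
  shows "prob {\<omega> \<in> space M. c < norm (X \<omega>)} = prob {\<omega> \<in> space M. c < norm (X' \<omega>)}"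
proof -
  have A: "{x. c < norm x} \<in> sets (borel :: 'b measure)" by measurable
  have "prob {\<omega> \<in> space M. c < norm (X \<omega>)} = measure (distr M borel X) {x. c < norm x}"
    using assms(1) A by (subst measure_distr) (auto intro!: arg_cong[where f = prob])
  also have "\<dots> = measure (distr M borel X') {x. c < norm x}"
    using assms(3) by simp
  also have "\<dots> = prob {\<omega> \<in> space M. c < norm (X' \<omega>)}"
    using assms(2) A by (subst measure_distr) (auto intro!: arg_cong[where f = prob])
  finally show ?thesis .
qed

lemma prob_norm_diff_gt_le:
  fixes X X' :: "'a \<Rightarrow> 'b::real_normed_vector"
  assumes "X \<in> borel_measurable M" "X' \<in> borel_measurable M"
  shows "prob {\<omega> \<in> space M. s < norm (X \<omega> - X' \<omega>)}
    \<le> prob {\<omega> \<in> space M. s/2 < norm (X \<omega>)} + prob {\<omega> \<in> space M. s/2 < norm (X' \<omega>)}"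
proof -
  have split: "{\<omega> \<in> space M. s < norm (X \<omega> - X' \<omega>)}
      \<subseteq> {\<omega> \<in> space M. s/2 < norm (X \<omega>)} \<union> {\<omega> \<in> space M. s/2 < norm (X' \<omega>)}"
  proof (intro subsetI)
    fix \<omega> assume "\<omega> \<in> {\<omega> \<in> space M. s < norm (X \<omega> - X' \<omega>)}"
    moreover have "norm (X \<omega> - X' \<omega>) \<le> norm (X \<omega>) + norm (X' \<omega>)"
      by (rule norm_triangle_ineq4)
    ultimately show "\<omega> \<in> {\<omega> \<in> space M. s/2 < norm (X \<omega>)} \<union> {\<omega> \<in> space M. s/2 < norm (X' \<omega>)}"
      by auto
  qed
  have "prob {\<omega> \<in> space M. s < norm (X \<omega> - X' \<omega>)}
      \<le> prob ({\<omega> \<in> space M. s/2 < norm (X \<omega>)} \<union> {\<omega> \<in> space M. s/2 < norm (X' \<omega>)})"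
    by (rule finite_measure_mono[OF split]) (use assms in measurable)
  also have "\<dots> \<le> prob {\<omega> \<in> space M. s/2 < norm (X \<omega>)} + prob {\<omega> \<in> space M. s/2 < norm (X' \<omega>)}"
    by (rule measure_Un_le) (use assms in measurable)
  finally show ?thesis .
qed

lemma prob_norm_le_eq:
  assumes "X \<in> borel_measurable M"
  shows "prob {\<omega> \<in> space M. norm (X \<omega>) \<le> t} = 1 - prob {\<omega> \<in> space M. t < norm (X \<omega>)}"
proof -
  have "{\<omega> \<in> space M. norm (X \<omega>) \<le> t} = space M - {\<omega> \<in> space M. t < norm (X \<omega>)}" by auto
  moreover have "{\<omega> \<in> space M. t < norm (X \<omega>)} \<in> events" using assms by measurable
  ultimately show ?thesis by (simp add: prob_compl)
qed

lemma prob_norm_gt_mult_le_prob_norm_diff_gt: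
  fixes X X' :: "'a \<Rightarrow> 'b::{real_normed_vector, second_countable_topology}"
  assumes "indep_var borel X borel X'"
  shows "prob {\<omega> \<in> space M. s + t < norm (X \<omega>)} * prob {\<omega> \<in> space M. norm (X' \<omega>) \<le> t}
    \<le> prob {\<omega> \<in> space M. s < norm (X \<omega> - X' \<omega>)}"
proof -
  have meas: "X \<in> borel_measurable M" "X' \<in> borel_measurable M"
    using indep_var_rv1[OF assms] indep_var_rv2[OF assms] by simp_all
  have A: "{x. s + t < norm x} \<in> sets (borel :: 'b measure)"
    and B: "{x. norm x \<le> t} \<in> sets (borel :: 'b measure)" by measurable
  have "prob {\<omega> \<in> space M. s + t < norm (X \<omega>)} * prob {\<omega> \<in> space M. norm (X' \<omega>) \<le> t}
      = prob ((\<lambda>\<omega>. (X \<omega>, X' \<omega>)) -` ({x. s + t < norm x} \<times> {x. norm x \<le> t}) \<inter> space M)"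
    using indep_varD[OF assms A B] by (simp add: vimage_def Int_def conj_commute)
  also have "\<dots> \<le> prob {\<omega> \<in> space M. s < norm (X \<omega> - X' \<omega>)}"
  proof (rule finite_measure_mono)
    show "(\<lambda>\<omega>. (X \<omega>, X' \<omega>)) -` ({x. s + t < norm x} \<times> {x. norm x \<le> t}) \<inter> space M
        \<subseteq> {\<omega> \<in> space M. s < norm (X \<omega> - X' \<omega>)}"
    proof (intro subsetI)
      fix \<omega> assume "\<omega> \<in> (\<lambda>\<omega>. (X \<omega>, X' \<omega>)) -` ({x. s + t < norm x} \<times> {x. norm x \<le> t}) \<inter> space M"
      moreover have "norm (X \<omega>) - norm (X' \<omega>) \<le> norm (X \<omega> - X' \<omega>)"
        by (rule norm_triangle_ineq2)
      ultimately show "\<omega> \<in> {\<omega> \<in> space M. s < norm (X \<omega> - X' \<omega>)}"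
        by auto
    qed
    show "{\<omega> \<in> space M. s < norm (X \<omega> - X' \<omega>)} \<in> events"
      using meas by measurable
  qed
  finally show ?thesis .
qed

lemma prob_norm_gt_le_twice_prob_norm_diff_gt:
  fixes X X' :: "'a \<Rightarrow> 'b::{real_normed_vector, second_countable_topology}"
  assumes "indep_var borel X borel X'" "prob {\<omega> \<in> space M. t < norm (X' \<omega>)} \<le> 1/2"
  shows "prob {\<omega> \<in> space M. s + t < norm (X \<omega>)} \<le> 2 * prob {\<omega> \<in> space M. s < norm (X \<omega> - X' \<omega>)}"
proof -
  have "prob {\<omega> \<in> space M. s + t < norm (X \<omega>)} * (1/2)
      \<le> prob {\<omega> \<in> space M. s + t < norm (X \<omega>)} * prob {\<omega> \<in> space M. norm (X' \<omega>) \<le> t}"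
    using assms prob_norm_le_eq[OF indep_var_rv2[OF assms(1)]] by (intro mult_left_mono) auto
  then show ?thesis
    using prob_norm_gt_mult_le_prob_norm_diff_gt[OF assms(1), of s t] by linarith
qed

end

lemma
  fixes M :: "'a measure" and Y Y' :: "nat \<Rightarrow> 'a \<Rightarrow> 'b::topological_space"
  assumes "prob_space M"
    and indep: "prob_space.indep_var M
        (PiM UNIV (\<lambda>_. borel)) (\<lambda>\<omega> n. Y n \<omega>) (PiM UNIV (\<lambda>_. borel)) (\<lambda>\<omega> n. Y' n \<omega>)"
    and copy: "distr M (PiM UNIV (\<lambda>_. borel)) (\<lambda>\<omega> n. Y n \<omega>)
             = distr M (PiM UNIV (\<lambda>_. borel)) (\<lambda>\<omega> n. Y' n \<omega>)"
  shows indep_var_components: "prob_space.indep_var M borel (Y n) borel (Y' n)"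
    and distr_components_eq: "distr M borel (Y n) = distr M borel (Y' n)"
proof -
  interpret prob_space M by fact
  show "indep_var borel (Y n) borel (Y' n)"
    using indep_var_compose[OF indep, of "\<lambda>x. x n" borel "\<lambda>x. x n" borel]
    by (simp add: comp_def)
  have "distr M borel (Y n) = distr (distr M (PiM UNIV (\<lambda>_. borel)) (\<lambda>\<omega> n. Y n \<omega>)) borel (\<lambda>x. x n)"
    using indep_var_rv1[OF indep] by (subst distr_distr) (auto simp: comp_def)
  also have "\<dots> = distr M borel (Y' n)"
    unfolding copy using indep_var_rv2[OF indep] by (subst distr_distr) (auto simp: comp_def)
  finally show "distr M borel (Y n) = distr M borel (Y' n)" .
qed

theorem lemma3p2:
  fixes M :: "'a measure"
    and Y Y' :: "nat \<Rightarrow> 'a \<Rightarrow> 'b::{banach, second_countable_topology}"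
    and a :: "nat \<Rightarrow> real"
    and \<gamma>sup \<gamma>inf :: ereal
  assumes "prob_space M"
    and Y_meas: "\<And>n. Y n \<in> borel_measurable M"
    and Y'_meas: "\<And>n. Y' n \<in> borel_measurable M"
    and Y_prob0: "\<And>\<epsilon>. \<epsilon> > 0 \<Longrightarrow>
        (\<lambda>n. measure M {\<omega> \<in> space M. \<epsilon> < norm (Y n \<omega>)}) \<longlonglongrightarrow> 0"
    and indep: "prob_space.indep_var M
        (PiM UNIV (\<lambda>_. borel)) (\<lambda>\<omega> n. Y n \<omega>)
        (PiM UNIV (\<lambda>_. borel)) (\<lambda>\<omega> n. Y' n \<omega>)"
    and copy: "distr M (PiM UNIV (\<lambda>_. borel)) (\<lambda>\<omega> n. Y n \<omega>)
             = distr M (PiM UNIV (\<lambda>_. borel)) (\<lambda>\<omega> n. Y' n \<omega>)"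
    and a_pos: "\<And>n. a n > 0"
    and a_lim: "filterlim a at_top sequentially"
    and gam: "0 \<le> \<gamma>sup" "\<gamma>sup \<le> \<gamma>inf"
    and hyp_sup: "\<And>s. s > 0 \<Longrightarrow>
        limsup (\<lambda>n. log_tail M (a n) (\<lambda>\<omega>. Y n \<omega> - Y' n \<omega>) s) = - \<gamma>sup"
    and hyp_inf: "\<And>s. s > 0 \<Longrightarrow>
        liminf (\<lambda>n. log_tail M (a n) (\<lambda>\<omega>. Y n \<omega> - Y' n \<omega>) s) = - \<gamma>inf"
  shows "\<forall>s>0. limsup (\<lambda>n. log_tail M (a n) (Y n) s) = - \<gamma>sup
              \<and> liminf (\<lambda>n. log_tail M (a n) (Y n) s) = - \<gamma>inf"
proof (intro allI impI)
  fix s :: real assume "s > 0"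
  interpret prob_space M by fact
  have same_tail: "prob {\<omega> \<in> space M. c < norm (Y' n \<omega>)} = prob {\<omega> \<in> space M. c < norm (Y n \<omega>)}"
    for c n
    using distr_components_eq[OF assms(1) indep copy, symmetric]
    by (rule prob_norm_gt_eq_of_distr_eq[OF Y'_meas Y_meas])
  have "eventually (\<lambda>n. prob {\<omega> \<in> space M. s/2 < norm (Y n \<omega>)} < 1/2) sequentially"
    using order_tendstoD(2)[OF Y_prob0[of "s/2"], of "1/2"] \<open>s > 0\<close> by simp
  then have upper: "eventually (\<lambda>n. prob {\<omega> \<in> space M. s < norm (Y n \<omega>)}
      \<le> 2 * prob {\<omega> \<in> space M. s/2 < norm (Y n \<omega> - Y' n \<omega>)}) sequentially"
  proof eventually_elim
    case (elim n)
    then show ?case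
      using prob_norm_gt_le_twice_prob_norm_diff_gt[OF indep_var_components[OF assms(1) indep copy, of n],
          where s = "s/2" and t = "s/2"]
      unfolding same_tail by simp
  qed
  have "prob {\<omega> \<in> space M. 2 * s < norm (Y n \<omega> - Y' n \<omega>)} \<le> 2 * prob {\<omega> \<in> space M. s < norm (Y n \<omega>)}"
    for n
    using prob_norm_diff_gt_le[OF Y_meas[of n] Y'_meas[of n], of "2 * s"] by (simp add: same_tail)
  then have lower: "eventually (\<lambda>n. prob {\<omega> \<in> space M. 2 * s < norm (Y n \<omega> - Y' n \<omega>)}
      \<le> 2 * prob {\<omega> \<in> space M. s < norm (Y n \<omega>)}) sequentially"
    by (simp add: always_eventually)
  show "limsup (\<lambda>n. log_tail M (a n) (Y n) s) = - \<gamma>sup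
      \<and> liminf (\<lambda>n. log_tail M (a n) (Y n) s) = - \<gamma>inf"
    using limsup_log_tail_le[OF a_lim a_pos _ upper] liminf_log_tail_le[OF a_lim a_pos _ upper]
      limsup_log_tail_le[OF a_lim a_pos _ lower] liminf_log_tail_le[OF a_lim a_pos _ lower]
      hyp_sup[of "s/2"] hyp_inf[of "s/2"] hyp_sup[of "2 * s"] hyp_inf[of "2 * s"] \<open>s > 0\<close>
    by (simp add: antisym)
qed

end
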